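(* Let $k\in\mathbb{N}$, $p_k=3k-1$, $A_k=\{k,2k-1\}$ and $\mathcal{M}_k=\{ip_k+j:\ i\in\mathbb{N}_0,\ k\le j\le 2k-1\}$. For a game $X\subseteq\mathbb{N}_0$, one has $P(X)=\mathcal{M}_k$ if and only if $A_k\subseteq X\subseteq\mathcal{M}_k$.
   Context: A one-heap game is a set $X\subseteq\mathbb{N}_0$ of moves; from position $x\in\mathbb{N}_0$ one may move to $y\in\mathbb{N}_0$ iff $x-y\in X$. Misère play: a player who cannot move wins. If $0\in X$, $P(X)=\varnothing$. Otherwise: a position is an N-position if it has no option or some option is a P-position; otherwise it is a P-position; $P(X)$ denotes the set of P-positions. *)

theory Defs
  imports Main
begin

text \<open>Misere one-heap game with move set X.\<close>

function isP :: "nat set \<Rightarrow> nat \<Rightarrow> bool" where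
  "isP X x = (0 \<notin> X \<and> (\<exists>m\<in>X. m \<le> x) \<and>
              (\<forall>m\<in>X. 0 < m \<and> m \<le> x \<longrightarrow> \<not> isP X (x - m)))"
  by auto
termination by (relation "measure snd") auto

definition Ppos :: "nat set \<Rightarrow> nat set" where
  "Ppos X = {x. isP X x}"

definition pk :: "nat \<Rightarrow> nat" where
  "pk k = 3 * k - 1"

definition Ak :: "nat \<Rightarrow> nat set" where
  "Ak k = {k, 2 * k - 1}"

definition Mk :: "nat \<Rightarrow> nat set" where
  "Mk k = {i * pk k + j | i j. k \<le> j \<and> j \<le> 2 * k - 1}"

end

theory Submission imports Defs begin

text \<open>For a game without the move 0, \<open>Ppos X\<close> is the unique set \<open>S\<close> such that every position
  in \<open>S\<close> has an option, no move leads from \<open>S\<close> into \<open>S\<close>, and every position outside \<open>S\<close> that has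
  an option has one in \<open>S\<close>. Both \<open>Ak k\<close> and \<open>Mk k\<close> live in the residues \<open>[k, 2k-1]\<close> modulo
  \<open>p = 3k-1\<close>; the difference of two such residues is in \<open>[0, k-1]\<close> or \<open>[2k, 3k-2]\<close> modulo \<open>p\<close>,
  so no move of \<open>X \<subseteq> Mk k\<close> leads from \<open>Mk k\<close> into \<open>Mk k\<close>, while the moves \<open>k\<close> and \<open>2k-1\<close> carry
  every other residue back into \<open>[k, 2k-1]\<close>. Conversely, a move outside \<open>Mk k\<close> would lead from
  \<open>m + k\<close> or \<open>m + 2k-1\<close> (one of which lies in \<open>Mk k\<close>) to \<open>k\<close> or \<open>2k-1\<close>, and the positions \<open>k\<close> and
  \<open>4k-2 = p + (k-1)\<close> force the moves \<open>k\<close> and \<open>2k-1\<close>.\<close>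

definition is_P_set :: "nat set \<Rightarrow> nat set \<Rightarrow> bool" where
  "is_P_set X S \<longleftrightarrow>
     (\<forall>x\<in>S. \<exists>m\<in>X. m \<le> x) \<and>
     (\<forall>x\<in>S. \<forall>m\<in>X. m \<le> x \<longrightarrow> x - m \<notin> S) \<and>
     (\<forall>x. x \<notin> S \<longrightarrow> (\<exists>m\<in>X. m \<le> x) \<longrightarrow> (\<exists>m\<in>X. m \<le> x \<and> x - m \<in> S))"

declare isP.simps[simp del]

lemma isP_iff:
  assumes "0 \<notin> X"
  shows "isP X x \<longleftrightarrow> (\<exists>m\<in>X. m \<le> x) \<and> (\<forall>m\<in>X. m \<le> x \<longrightarrow> \<not> isP X (x - m))"
proof -
  have "\<And>m. m \<in> X \<Longrightarrow> 0 < m" using assms by (metis gr0I)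
  then show ?thesis using assms by (subst isP.simps) blast
qed

lemma Ppos_eq_empty_if_zero_move: "0 \<in> X \<Longrightarrow> Ppos X = {}"
  unfolding Ppos_def using isP.simps[of X] by blast

lemma is_P_set_iff:
  "is_P_set X S \<longleftrightarrow>
     (\<forall>x. x \<in> S \<longleftrightarrow> (\<exists>m\<in>X. m \<le> x) \<and> (\<forall>m\<in>X. m \<le> x \<longrightarrow> x - m \<notin> S))"
  unfolding is_P_set_def by blast

lemma Ppos_eq_iff_is_P_set:
  assumes "0 \<notin> X"
  shows "Ppos X = S \<longleftrightarrow> is_P_set X S"
proof
  assume "Ppos X = S"
  then have P: "isP X x \<longleftrightarrow> x \<in> S" for x unfolding Ppos_def by blast
  have "x \<in> S \<longleftrightarrow> (\<exists>m\<in>X. m \<le> x) \<and> (\<forall>m\<in>X. m \<le> x \<longrightarrow> x - m \<notin> S)" for x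
    using isP_iff[OF assms, of x] by (simp add: P)
  then show "is_P_set X S" unfolding is_P_set_iff by blast
next
  assume "is_P_set X S"
  then have S: "x \<in> S \<longleftrightarrow> (\<exists>m\<in>X. m \<le> x) \<and> (\<forall>m\<in>X. m \<le> x \<longrightarrow> x - m \<notin> S)" for x
    unfolding is_P_set_iff by blast
  have "isP X x \<longleftrightarrow> x \<in> S" for x
  proof (induction x rule: less_induct)
    case (less x)
    have "isP X (x - m) \<longleftrightarrow> x - m \<in> S" if "m \<in> X" "m \<le> x" for m
    proof -
      have "0 < m" using that(1) assms by (metis gr0I)
      then show ?thesis using less that(2) by simp
    qed
    then show ?case using isP_iff[OF assms, of x] S[of x] by blast
  qed
  then show "Ppos X = S" unfolding Ppos_def by blast
qed

lemma mod_diff_nat: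
  fixes x m p :: nat
  assumes "m \<le> x" "0 < p"
  shows "(x - m) mod p =
    (if m mod p \<le> x mod p then x mod p - m mod p else x mod p + p - m mod p)"
proof -
  define d where "d = int (x mod p) - int (m mod p)"
  have "x mod p < p" "m mod p < p" using assms(2) by simp_all
  then have d_bounds: "- int p < d" "d < int p" unfolding d_def by linarith+
  have "int ((x - m) mod p) = (int x - int m) mod int p"
    using assms(1) by (simp add: zmod_int of_nat_diff)
  also have "\<dots> = d mod int p" unfolding d_def by (simp add: mod_diff_eq zmod_int)
  also have "\<dots> = (if 0 \<le> d then d else d + int p)"
  proof (cases "0 \<le> d")
    case True
    then show ?thesis using d_bounds by (simp add: mod_pos_pos_trivial)
  next
    case False
    have "(d + int p) mod int p = d + int p" using False d_bounds by (intro mod_pos_pos_trivial) linarith+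
    then show ?thesis using False by simp
  qed
  finally have "int ((x - m) mod p) = (if 0 \<le> d then d else d + int p)" .
  then show ?thesis unfolding d_def by (cases "m mod p \<le> x mod p") (simp_all add: of_nat_diff)
qed

lemma mem_Mk_iff:
  assumes "1 \<le> k"
  shows "x \<in> Mk k \<longleftrightarrow> k \<le> x mod pk k \<and> x mod pk k \<le> 2 * k - 1"
proof
  assume "x \<in> Mk k"
  then obtain i j where "x = i * pk k + j" "k \<le> j" "j \<le> 2 * k - 1"
    unfolding Mk_def by auto
  moreover have "j < pk k" using calculation assms unfolding pk_def by simp
  ultimately show "k \<le> x mod pk k \<and> x mod pk k \<le> 2 * k - 1" by simp
next
  assume "k \<le> x mod pk k \<and> x mod pk k \<le> 2 * k - 1"
  moreover have "x = x div pk k * pk k + x mod pk k" by simp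
  ultimately show "x \<in> Mk k" unfolding Mk_def by blast
qed

lemma Mk_ge: "1 \<le> k \<Longrightarrow> x \<in> Mk k \<Longrightarrow> k \<le> x"
  by (meson le_trans mem_Mk_iff mod_less_eq_dividend)

lemma Mk_below_pk: "1 \<le> k \<Longrightarrow> x \<in> Mk k \<Longrightarrow> x < pk k \<Longrightarrow> k \<le> x \<and> x \<le> 2 * k - 1"
  using mem_Mk_iff by simp

lemma Ak_subset_Mk: "1 \<le> k \<Longrightarrow> Ak k \<subseteq> Mk k"
  using mem_Mk_iff by (auto simp: Ak_def pk_def)

lemma Ak_mod_pk: "1 \<le> k \<Longrightarrow> a \<in> Ak k \<Longrightarrow> a mod pk k = a"
  by (auto simp: Ak_def pk_def)

lemma Mk_diff_notin:
  assumes k: "1 \<le> k" and "x \<in> Mk k" "m \<in> Mk k" "m \<le> x"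
  shows "x - m \<notin> Mk k"
proof -
  define p r s where "p = pk k" and "r = x mod p" and "s = m mod p"
  have p: "p = 3 * k - 1" "0 < p" using k by (simp_all add: p_def pk_def)
  have rs: "k \<le> r" "r \<le> 2 * k - 1" "k \<le> s" "s \<le> 2 * k - 1"
    using assms mem_Mk_iff[OF k] by (simp_all add: p_def r_def s_def)
  have diff: "(x - m) mod p = (if s \<le> r then r - s else r + p - s)"
    using mod_diff_nat[OF assms(4) p(2)] by (simp add: r_def s_def)
  have "(x - m) mod p < k \<or> 2 * k - 1 < (x - m) mod p"
  proof (cases "s \<le> r")
    case True
    then have "r - s < k" using rs k by arith
    then show ?thesis using diff True by simp
  next
    case False
    then have "2 * k - 1 < r + p - s" using rs p(1) k by arith
    then show ?thesis using diff False by simp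
  qed
  then show ?thesis using mem_Mk_iff[OF k] by (auto simp: p_def)
qed

lemma Ak_move_into_Mk:
  assumes k: "1 \<le> k" and "x \<notin> Mk k" "k \<le> x"
  shows "\<exists>a\<in>Ak k. a \<le> x \<and> x - a \<in> Mk k"
proof -
  have p: "pk k = 3 * k - 1" "0 < pk k" using k by (simp_all add: pk_def)
  have a_mod: "k mod pk k = k" "(2 * k - 1) mod pk k = 2 * k - 1"
    using Ak_mod_pk[OF k] by (simp_all add: Ak_def)
  show ?thesis
  proof (cases "x mod pk k < k")
    case True
    have "pk k \<le> x" using True assms(3) by (metis mod_less not_le)
    then have le: "2 * k - 1 \<le> x" using p by simp
    have "(x - (2 * k - 1)) mod pk k = x mod pk k + pk k - (2 * k - 1)"
      using True mod_diff_nat[OF le p(2)] a_mod by simp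
    then have "x - (2 * k - 1) \<in> Mk k" using True p k by (simp add: mem_Mk_iff)
    with le show ?thesis unfolding Ak_def by blast
  next
    case False
    then have "2 * k - 1 < x mod pk k" "x mod pk k < pk k"
      using assms(2) mem_Mk_iff[OF k] p by auto
    moreover from this have "(x - k) mod pk k = x mod pk k - k"
      using mod_diff_nat[OF assms(3) p(2)] a_mod by simp
    ultimately have "k \<le> (x - k) mod pk k \<and> (x - k) mod pk k \<le> 2 * k - 1" using p k by arith
    then have "x - k \<in> Mk k" using mem_Mk_iff[OF k] by simp
    with assms(3) show ?thesis unfolding Ak_def by blast
  qed
qed

lemma Ak_shift_into_Mk:
  assumes k: "1 \<le> k" and "m \<notin> Mk k"
  shows "\<exists>a\<in>Ak k. a + m \<in> Mk k"
proof -
  define p r where "p = pk k" and "r = m mod p"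
  have p: "p = 3 * k - 1" "0 < p" using k by (simp_all add: p_def pk_def)
  have "\<not> (k \<le> r \<and> r \<le> 2 * k - 1)"
    using assms(2) mem_Mk_iff[OF k] by (simp add: p_def r_def)
  then have r: "r < p" "r < k \<or> 2 * k - 1 < r" using p(2) by (auto simp: r_def)
  have shift: "(a + m) mod p = (a + r) mod p" for a by (simp add: r_def mod_add_right_eq)
  show ?thesis
  proof (cases "r < k")
    case True
    then have "(k + m) mod p = k + r" using shift p by simp
    then have "k + m \<in> Mk k" using True k by (simp add: mem_Mk_iff p_def)
    then show ?thesis unfolding Ak_def by blast
  next
    case False
    then have "p \<le> 2 * k - 1 + r" "2 * k - 1 + r - p < p" using r p k by linarith+
    then have "(2 * k - 1 + m) mod p = 2 * k - 1 + r - p" using shift by (simp add: le_mod_geq)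
    moreover have "k \<le> 2 * k - 1 + r - p \<and> 2 * k - 1 + r - p \<le> 2 * k - 1" using False r p k by linarith
    ultimately have "2 * k - 1 + m \<in> Mk k" using mem_Mk_iff[OF k] by (simp add: p_def)
    then show ?thesis unfolding Ak_def by blast
  qed
qed

lemma is_P_set_Mk:
  assumes k: "1 \<le> k" and "Ak k \<subseteq> X" "X \<subseteq> Mk k"
  shows "is_P_set X (Mk k)"
proof -
  have kX: "k \<in> X" using assms(2) by (simp add: Ak_def)
  have "\<exists>m\<in>X. m \<le> x" if "x \<in> Mk k" for x
    using kX Mk_ge[OF k that] by blast
  moreover have "x - m \<notin> Mk k" if "x \<in> Mk k" "m \<in> X" "m \<le> x" for x m
    using Mk_diff_notin[OF k] that assms(3) by blast
  moreover have "\<exists>m\<in>X. m \<le> x \<and> x - m \<in> Mk k" if "x \<notin> Mk k" "m \<in> X" "m \<le> x" for x m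
  proof -
    have "k \<le> x" using Mk_ge[OF k] that assms(3) by (meson le_trans subsetD)
    then show ?thesis using Ak_move_into_Mk[OF k that(1)] assms(2) by blast
  qed
  ultimately show ?thesis unfolding is_P_set_def by blast
qed

lemma moves_subset_Mk:
  assumes k: "1 \<le> k" and S: "is_P_set X (Mk k)"
  shows "X \<subseteq> Mk k"
proof
  fix m assume "m \<in> X"
  show "m \<in> Mk k"
  proof (rule ccontr)
    assume "m \<notin> Mk k"
    then obtain a where a: "a \<in> Ak k" "a + m \<in> Mk k" using Ak_shift_into_Mk[OF k] by blast
    moreover have "a + m - m \<notin> Mk k"
      using S a(2) \<open>m \<in> X\<close> unfolding is_P_set_def by (meson le_add2)
    ultimately show False using Ak_subset_Mk[OF k] by auto
  qed
qed

lemma Ak_subset_moves: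
  assumes k: "1 \<le> k" and S: "is_P_set X (Mk k)" and XM: "X \<subseteq> Mk k"
  shows "Ak k \<subseteq> X"
proof -
  have X_ge: "k \<le> m" if "m \<in> X" for m using Mk_ge[OF k] XM that by (meson subsetD)
  have p: "pk k + 1 = 3 * k" using k by (simp add: pk_def)
  have "k \<in> Mk k" using Ak_subset_Mk[OF k] by (simp add: Ak_def)
  then obtain m where "m \<in> X" "m \<le> k" using S unfolding is_P_set_def by blast
  then have kX: "k \<in> X" using X_ge le_antisym by metis
  define x where "x = pk k + (k - 1)"
  have "x mod pk k = (k - 1) mod pk k" by (simp add: x_def)
  also have "\<dots> = k - 1" using k by (simp add: pk_def)
  finally have "x mod pk k = k - 1" .
  then have "x \<notin> Mk k" using mem_Mk_iff[OF k] k by simp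
  moreover have "k \<le> x" using p unfolding x_def by arith
  ultimately obtain m where m: "m \<in> X" "m \<le> x" "x - m \<in> Mk k"
    using S kX unfolding is_P_set_def by blast
  have "m < pk k" using Mk_ge[OF k m(3)] m(2) k unfolding x_def by arith
  then have "m \<le> 2 * k - 1" using Mk_below_pk[OF k] XM m(1) by blast
  moreover have "x - m < pk k" using X_ge[OF m(1)] p k unfolding x_def by arith
  then have "x - m \<le> 2 * k - 1" using Mk_below_pk[OF k m(3)] by blast
  then have "2 * k - 1 \<le> m" using m(2) p unfolding x_def by arith
  ultimately have "2 * k - 1 \<in> X" using m(1) by (metis le_antisym)
  with kX show ?thesis by (simp add: Ak_def)
qed

theorem theorem8:
  fixes k :: nat and X :: "nat set"
  assumes "1 \<le> k"
  shows "Ppos X = Mk k \<longleftrightarrow> Ak k \<subseteq> X \<and> X \<subseteq> Mk k"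
proof
  assume P: "Ppos X = Mk k"
  have "Mk k \<noteq> {}" using Ak_subset_Mk[OF assms] by (auto simp: Ak_def)
  then have "0 \<notin> X" using P Ppos_eq_empty_if_zero_move[of X] by auto
  then have S: "is_P_set X (Mk k)" using P Ppos_eq_iff_is_P_set by blast
  then have "X \<subseteq> Mk k" using moves_subset_Mk[OF assms] by blast
  with S show "Ak k \<subseteq> X \<and> X \<subseteq> Mk k" using Ak_subset_moves[OF assms] by blast
next
  assume A: "Ak k \<subseteq> X \<and> X \<subseteq> Mk k"
  moreover have "0 \<notin> Mk k" using Mk_ge[OF assms] assms by fastforce
  ultimately have "0 \<notin> X" by blast
  with A show "Ppos X = Mk k" using Ppos_eq_iff_is_P_set is_P_set_Mk[OF assms] by blast
qed

end
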